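(* Let $r>1$, $0<a<r$ coprime, and let $\sigma$ be any $3$-dimensional cone of the Danilov fan $\Sigma(r,a)$. Then any two vertices of the McKay quiver of type $\frac1r(1,a,r-a)$ can be joined by a path, with orientations of arrows ignored, consisting of $\sigma$-distinguished arrows all different from $x_{r-1}$.
   Context: Notation: for integers $s$ and $t>0$, $\langle s\rangle_t$ is the least non-negative integer congruent to $s$ modulo $t$. A pair of integers $(r,a)$ is admissible if $r\ge1$, $0\le a<r$, $\gcd(r,a)=1$ (so $a=0$ only for $r=1$). For admissible $(r,a)$ put $N(r,a)=\mathbb Z^3+\mathbb Z\cdot\frac1r(1,a,r-a)\subset\mathbb Q^3$; $e_1,e_2,e_3$ is the standard basis and $\Delta(r,a)$ the cone spanned by $e_1,e_2,e_3$. Let $b$ be an inverse of $a$ modulo $r$ and $p_i=\frac1r(\langle -ib\rangle_r,r-i,i)$, $i=0,\dots,r$ (so $p_0=e_2$, $p_r=e_3$, $p_{r-a}=\frac1r(1,a,r-a)$). For $r>1$ let $(r_L,a_L)=(r-a,\langle r\rangle_{r-a})$, $(r_R,a_R)=(a,\langle -r\rangle_a)$; there are lattice isomorphisms $L:N(r_L,a_L)\to N(r,a)$, $R:N(r_R,a_R)\to N(r,a)$ with $L(e_1)=e_1$, $L(e_2)=e_2$, $L(e_3)=p_{r-a}$, $R(e_1)=e_1$, $R(e_2)=p_{r-a}$, $R(e_3)=e_3$. The Danilov fan $\Sigma(r,a)$ is defined recursively: $\Sigma(1,0)$ is $\Delta(1,0)$ with its faces; for $r>1$, $\Sigma(r,a)$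 consists of the cone spanned by $e_2,e_3,p_{r-a}$ with its faces, together with $L(\Sigma(r_L,a_L))$ and $R(\Sigma(r_R,a_R))$. The Danilov resolution $Y$ is the smooth toric variety of $\Sigma(r,a)$, with torus $T$; its rays are spanned by $e_1,p_0,\dots,p_r$; $D_i$ is the $T$-invariant prime divisor of the ray through $p_i$ and $E_j$ that of $e_j$. The permutation $\tau(r,a,\cdot)$ of $\{0,\dots,r-1\}$: if $a\in\{1,r-1\}$, $\tau(r,a,i)=\langle ai-1\rangle_r$; otherwise $\tau(r,a,i)=\tau(r-a,\langle r\rangle_{r-a},\langle i\rangle_{r-a})$ for $i\ge a$ and $\tau(r,a,i)=(r-a)+\tau(a,\langle -r\rangle_a,i)$ for $i<a$. With indices mod $r$, on $Y$ define $Y_{i-a}=\sum_{k=0}^{\tau(r,a,i)}D_k$, $Z_i=\sum_{k=\tau(r,a,i)+1}^{r}D_k$ ($i=0,\dots,r-1$), and $X_0,\dots,X_{r-1}$ the unique divisors with $X_0=E_1$ and $X_i+Z_{i+1}=Z_i+X_{i-a}$ for all $i$. The McKay quiver of type $\frac1r(1,a,r-a)$ has vertices $0,\dots,r-1$ (indices mod $r$) and arrows $x_i:i\to i+1$, $y_i:i\to i+a$, $z_i:i\to i-a$. The arrows $x_i,y_i,z_i$ are associated with the divisors $X_i,Y_i,Z_i$ respectively. For a $3$-dimensional cone $\sigma$ of $\Sigma(r,a)$, an arrow is $\sigma$-distinguished if its associated divisor has coefficient $0$ at each of the three rays of $\sigma$ (equivalently, its canonical section does not vanish at the $T$-fixed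 point of the chart $U_\sigma$). *)

theory Defs
  imports Complex_Main "HOL-Number_Theory.Cong"
begin

type_synonym vec3 = "rat \<times> rat \<times> rat"

definition c1 :: "vec3 \<Rightarrow> rat" where "c1 v = fst v"
definition c2 :: "vec3 \<Rightarrow> rat" where "c2 v = fst (snd v)"
definition c3 :: "vec3 \<Rightarrow> rat" where "c3 v = snd (snd v)"

definition e1 :: vec3 where "e1 = (1, 0, 0)"
definition e2 :: vec3 where "e2 = (0, 1, 0)"
definition e3 :: vec3 where "e3 = (0, 0, 1)"

definition lin3 :: "vec3 \<Rightarrow> vec3 \<Rightarrow> vec3 \<Rightarrow> vec3 \<Rightarrow> vec3" where
  "lin3 u v w x =
     (c1 x * c1 u + c2 x * c1 v + c3 x * c1 w,
      c1 x * c2 u + c2 x * c2 v + c3 x * c2 w,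
      c1 x * c3 u + c2 x * c3 v + c3 x * c3 w)"

text \<open>An inverse b of a modulo r (the value of b mod r is unique when gcd(r,a)=1).\<close>
definition binv :: "nat \<Rightarrow> nat \<Rightarrow> int" where
  "binv r a = (SOME b. [int a * b = 1] (mod int r))"

definition pvec :: "nat \<Rightarrow> nat \<Rightarrow> nat \<Rightarrow> vec3" where
  "pvec r a i =
     (of_int ((- int i * binv r a) mod int r) / of_nat r,
      (of_nat r - of_nat i) / of_nat r,
      of_nat i / of_nat r)"

section \<open>The 3-dimensional cones of the Danilov fan, each given by its set of three generators\<close>

function danilov_cones :: "nat \<Rightarrow> nat \<Rightarrow> vec3 set set" where
  "danilov_cones r a =
     (if r \<le> 1 \<or> a = 0 \<or> r \<le> a then {{e1, e2, e3}}
      else {{e2, e3, pvec r a (r - a)}}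
        \<union> (\<lambda>C. lin3 e1 e2 (pvec r a (r - a)) ` C) ` danilov_cones (r - a) (r mod (r - a))
        \<union> (\<lambda>C. lin3 e1 (pvec r a (r - a)) e3 ` C) ` danilov_cones a (nat ((- int r) mod int a)))"
  by pat_completeness auto
termination by (relation "measure fst") auto

function tau :: "nat \<Rightarrow> nat \<Rightarrow> nat \<Rightarrow> nat" where
  "tau r a i =
     (if r \<le> 1 \<or> a = 0 \<or> r \<le> a \<or> a = 1 \<or> a = r - 1
      then nat ((int a * int i - 1) mod int r)
      else if a \<le> i then tau (r - a) (r mod (r - a)) (i mod (r - a))
      else (r - a) + tau a (nat ((- int r) mod int a)) i)"
  by pat_completeness auto
termination by (relation "measure fst") auto

text \<open>Torus-invariant prime divisors are indexed by rays: None = the ray of e1 (E_1),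
  Some k = the ray of p_k (D_k). A divisor is its coefficient function.\<close>

type_synonym divisor = "nat option \<Rightarrow> int"

definition rays :: "nat \<Rightarrow> nat option set" where
  "rays r = insert None (Some ` {0..r})"

definition rayvec :: "nat \<Rightarrow> nat \<Rightarrow> nat option \<Rightarrow> vec3" where
  "rayvec r a \<rho> = (case \<rho> of None \<Rightarrow> e1 | Some k \<Rightarrow> pvec r a k)"

definition Ddiv :: "nat \<Rightarrow> divisor" where
  "Ddiv k = (\<lambda>\<rho>. if \<rho> = Some k then 1 else 0)"

definition E1div :: divisor where
  "E1div = (\<lambda>\<rho>. if \<rho> = None then 1 else 0)"

text \<open>Y_{i-a} = sum_{k=0}^{tau(i)} D_k, i.e. Y_j with j = (i - a) mod r, i = (j + a) mod r.\<close>
definition Ydiv :: "nat \<Rightarrow> nat \<Rightarrow> nat \<Rightarrow> divisor" where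
  "Ydiv r a j = (\<lambda>\<rho>. \<Sum>k\<in>{0..tau r a ((j + a) mod r)}. Ddiv k \<rho>)"

definition Zdiv :: "nat \<Rightarrow> nat \<Rightarrow> nat \<Rightarrow> divisor" where
  "Zdiv r a i = (\<lambda>\<rho>. \<Sum>k\<in>{tau r a i + 1..r}. Ddiv k \<rho>)"

text \<open>X_0, ..., X_{r-1}: the unique divisors with X_0 = E_1 and
  X_i + Z_{i+1} = Z_i + X_{i-a} (indices mod r); X_i := 0 for i >= r by convention.\<close>
definition Xdiv :: "nat \<Rightarrow> nat \<Rightarrow> nat \<Rightarrow> divisor" where
  "Xdiv r a = (THE X. X 0 = E1div
      \<and> (\<forall>i<r. \<forall>\<rho>. X i \<rho> + Zdiv r a ((i + 1) mod r) \<rho> = Zdiv r a i \<rho> + X ((i + r - a) mod r) \<rho>)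
      \<and> (\<forall>i\<ge>r. X i = (\<lambda>_. 0)))"

datatype arrow = ArrX nat | ArrY nat | ArrZ nat

fun arrow_tail :: "arrow \<Rightarrow> nat" where
  "arrow_tail (ArrX i) = i"
| "arrow_tail (ArrY i) = i"
| "arrow_tail (ArrZ i) = i"

fun arrow_head :: "nat \<Rightarrow> nat \<Rightarrow> arrow \<Rightarrow> nat" where
  "arrow_head r a (ArrX i) = (i + 1) mod r"
| "arrow_head r a (ArrY i) = (i + a) mod r"
| "arrow_head r a (ArrZ i) = (i + r - a) mod r"

fun arrow_div :: "nat \<Rightarrow> nat \<Rightarrow> arrow \<Rightarrow> divisor" where
  "arrow_div r a (ArrX i) = Xdiv r a i"
| "arrow_div r a (ArrY i) = Ydiv r a i"
| "arrow_div r a (ArrZ i) = Zdiv r a i"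

definition quiver_arrow :: "nat \<Rightarrow> arrow \<Rightarrow> bool" where
  "quiver_arrow r \<alpha> \<longleftrightarrow> arrow_tail \<alpha> < r"

definition distinguished :: "nat \<Rightarrow> nat \<Rightarrow> vec3 set \<Rightarrow> arrow \<Rightarrow> bool" where
  "distinguished r a \<sigma> \<alpha> \<longleftrightarrow>
     (\<forall>\<rho>\<in>rays r. rayvec r a \<rho> \<in> \<sigma> \<longrightarrow> arrow_div r a \<alpha> \<rho> = 0)"

end

theory Submission
  imports Defs
begin

text \<open>
  Induction along the recursive definition of the Danilov fan.  On the top cone, spanned by
  \<open>e_2, e_3, p_(r-a)\<close>, the arrows \<open>x_0, \<dots>, x_(r-2)\<close> are distinguished and pass through all
  vertices.  A cone of the left subfan is the image under \<open>L\<close> of a cone of \<open>\<Sigma>(r - a, a_L)\<close>.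
  On the rays of the left subfan the divisors \<open>X_i, Y_i, Z_i\<close> of \<open>Y\<close> restrict to those of the
  resolution for \<open>(r - a, a_L)\<close> (with the indices read modulo \<open>r - a\<close>), so every distinguished
  arrow of the smaller quiver lifts to a path of distinguished arrows, while the arrows \<open>z_i\<close>
  with \<open>i < a\<close> vanish there and join each vertex \<open>w\<close> to \<open>w mod (r - a)\<close>.  The right subfan is
  symmetric, with the arrows \<open>y_i\<close> joining \<open>w\<close> to \<open>w mod a\<close>.  The divisors \<open>X_i\<close> are only
  given implicitly; they are handled through the uniqueness of solutions of the cyclic recurrence
  defining them.
\<close>

declare danilov_cones.simps[simp del] tau.simps[simp del]

definition admissible :: "nat \<Rightarrow> nat \<Rightarrow> bool" where
  "admissible r a \<longleftrightarrow> 0 < r \<and> a < r \<and> coprime r a"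

text \<open>The children of \<open>(r, a)\<close> are \<open>(r_L, a_L) = (r - a, aL r a)\<close> and \<open>(r_R, a_R) = (a, aR r a)\<close>.\<close>

abbreviation aL :: "nat \<Rightarrow> nat \<Rightarrow> nat" where
  "aL r a \<equiv> r mod (r - a)"

abbreviation aR :: "nat \<Rightarrow> nat \<Rightarrow> nat" where
  "aR r a \<equiv> nat ((- int r) mod int a)"

lemma admissible_pos:
  assumes "admissible r a" "1 < r"
  shows "0 < a" "a < r"
  using assms unfolding admissible_def
  by (metis less_one nat_dvd_not_less neq0_conv coprime_0_right_iff)+

lemma coprime_diff_right:
  fixes r a :: nat
  assumes "coprime r a" "a \<le> r"
  shows "coprime r (r - a)"
proof (rule coprimeI)
  fix d assume "d dvd r" "d dvd r - a"
  then have "d dvd a"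
    using assms(2) by (metis diff_diff_cancel dvd_diff_nat)
  with \<open>d dvd r\<close> show "is_unit d"
    using assms(1) coprime_common_divisor by blast
qed

lemma admissible_left:
  assumes "admissible r a" "1 < r"
  shows "admissible (r - a) (aL r a)"
proof -
  have ar: "a < r" "coprime r a"
    using assms by (auto simp: admissible_def)
  then have "coprime r (r - a)"
    by (simp add: coprime_diff_right)
  then have "coprime (r - a) (aL r a)"
    using ar coprime_commute coprime_mod_right_iff by fastforce
  then show ?thesis
    using ar unfolding admissible_def by simp
qed

lemma aR_less:
  assumes "admissible r a" "1 < r"
  shows "aR r a < a"
  using admissible_pos[OF assms] by (simp add: nat_less_iff)

lemma admissible_right:
  assumes "admissible r a" "1 < r"
  shows "admissible a (aR r a)"
proof -
  have a0: "0 < a"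
    using admissible_pos[OF assms] by simp
  have "coprime (int a) ((- int r) mod int a)"
    using assms a0 by (simp add: admissible_def coprime_commute)
  then have "coprime a (aR r a)"
    using a0 by (metis coprime_int_iff nat_0_le of_nat_0_less_iff pos_mod_sign)
  then show ?thesis
    using aR_less[OF assms] a0 unfolding admissible_def by simp
qed

lemma aL_eq_mod: "(a::nat) < r \<Longrightarrow> a mod (r - a) = aL r a"
  by (metis le_add_diff_inverse less_imp_le_nat mod_add_self2)

lemma dvd_add_aR:
  assumes "admissible r a" "1 < r"
  shows "a dvd r + aR r a"
proof -
  have "0 < a"
    using admissible_pos[OF assms] by simp
  then have "int a dvd int r + (- int r) mod int a"
    by (simp add: mod_0_imp_dvd mod_add_right_eq)
  then have "int a dvd int (r + aR r a)"
    using \<open>0 < a\<close> by simp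
  then show ?thesis
    by presburger
qed

lemma mod_add_diff_eq_of_add:
  fixes m x y c :: nat
  assumes "c < m" "(y + c) mod m = x mod m"
  shows "(x + m - c) mod m = y mod m"
proof -
  have "[x + m - c + c = y + c] (mod m)"
    using assms by (simp add: cong_def)
  then have "[x + m - c = y] (mod m)"
    by (simp add: cong_add_rcancel_nat)
  then show ?thesis
    by (simp add: cong_def)
qed

lemma add_diff_mod_aR:
  assumes "admissible r a" "1 < r"
  shows "(x + (r - a)) mod a = (x + a - aR r a) mod a"
proof -
  have a: "0 < a" "a < r"
    using admissible_pos[OF assms] by simp_all
  obtain t where t: "r + aR r a = a * t"
    using dvd_add_aR[OF assms] by blast
  then have "1 \<le> t"
    using a by (cases t) auto
  then have "x + (r - a) + aR r a = x + a * (t - 1)"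
    using t a by (simp add: algebra_simps)
  then have "(x + (r - a) + aR r a) mod a = x mod a"
    by (metis mod_mult_self2)
  from mod_add_diff_eq_of_add[OF aR_less[OF assms] this] show ?thesis
    by simp
qed

section \<open>The permutation tau\<close>

lemma tau_base:
  "r \<le> 1 \<or> a = 0 \<or> r \<le> a \<or> a = 1 \<or> a = r - 1 \<Longrightarrow>
   tau r a i = nat ((int a * int i - 1) mod int r)"
  by (simp add: tau.simps[of r a i])

lemma tau_step:
  "\<not> (r \<le> 1 \<or> a = 0 \<or> r \<le> a \<or> a = 1 \<or> a = r - 1) \<Longrightarrow>
   tau r a i = (if a \<le> i then tau (r - a) (aL r a) (i mod (r - a)) else (r - a) + tau a (aR r a) i)"
  by (simp add: tau.simps[of r a i])

lemma tau_r_eq_1: "tau 1 a i = 0"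
  by (simp add: tau_base)

lemma int_mod_eqI: "0 \<le> y \<Longrightarrow> y < m \<Longrightarrow> x = y + m * k \<Longrightarrow> x mod m = (y::int)"
  by simp

lemma tau_a_eq_1:
  assumes "i < r"
  shows "tau r 1 i = (if i = 0 then r - 1 else i - 1)"
proof -
  have "(int i - 1) mod int r = int (if i = 0 then r - 1 else i - 1)"
    using assms by (intro int_mod_eqI[where k = "if i = 0 then -1 else 0"]) auto
  then show ?thesis
    by (simp add: tau_base)
qed

lemma tau_a_eq_r_minus_1:
  assumes "1 < r" "i < r"
  shows "tau r (r - 1) i = (if i = r - 1 then 0 else r - 1 - i)"
proof -
  have "(int (r - 1) * int i - 1) mod int r = int (if i = r - 1 then 0 else r - 1 - i)"
    using assms
    by (intro int_mod_eqI[where k = "if i = r - 1 then int r - 2 else int i - 1"])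
       (auto simp: of_nat_diff algebra_simps)
  then show ?thesis
    by (simp add: tau_base)
qed

lemma mod_diff_one_self: "2 < r \<Longrightarrow> r mod (r - 1) = (1::nat)"
proof -
  assume "2 < r"
  then have "r = 1 + (r - 1) * 1" "1 < r - 1"
    by auto
  then show ?thesis
    by (metis mod_mult_self2 mod_less)
qed

lemma tau_rec:
  assumes "admissible r a" "1 < r" "i < r"
  shows "tau r a i =
    (if a \<le> i then tau (r - a) (aL r a) (i mod (r - a)) else (r - a) + tau a (aR r a) i)"
proof -
  have a: "0 < a" "a < r"
    using admissible_pos[OF assms(1,2)] by simp_all
  consider "a = 1" | "a = r - 1" "2 < r" | "\<not> (r \<le> 1 \<or> a = 0 \<or> r \<le> a \<or> a = 1 \<or> a = r - 1)"
    using a assms(2) by linarith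
  then show ?thesis
  proof cases
    case 1
    consider "i = 0" | "r = 2" "i = 1" | "2 < r" "0 < i"
      using assms(2,3) by linarith
    then show ?thesis
    proof cases
      case 3
      have "tau (r - 1) 1 (i mod (r - 1)) = i - 1"
        using 3 assms(3) tau_a_eq_1[of "i mod (r - 1)" "r - 1"]
        by (cases "i = r - 1") simp_all
      then show ?thesis
        using 3 \<open>a = 1\<close> assms(3) mod_diff_one_self[of r] tau_a_eq_1[of i r] by simp
    qed (use \<open>a = 1\<close> assms(3) tau_a_eq_1[of i r] tau_r_eq_1 in simp_all)
  next
    case 2
    have "aR r a = (r - 1) - 1"
    proof -
      have "(- int r) mod int a = int r - 2"
        using 2 by (intro int_mod_eqI[where k = "-2"]) (auto simp: of_nat_diff)
      then show ?thesis
        using 2 by simp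
    qed
    show ?thesis
    proof (cases "a \<le> i")
      case True
      then have "i = r - 1"
        using 2 assms(3) by simp
      then show ?thesis
        using 2 tau_a_eq_r_minus_1[of r i] tau_r_eq_1 by simp
    next
      case False
      have "tau a (aR r a) i = r - 1 - 1 - i"
        unfolding \<open>aR r a = r - 1 - 1\<close> unfolding \<open>a = r - 1\<close>
        using 2 False tau_a_eq_r_minus_1[of "r - 1" i] by auto
      moreover have "tau r a i = r - 1 - i"
        using 2 False tau_a_eq_r_minus_1[of r i] by auto
      ultimately show ?thesis
        using 2 False by auto
    qed
  qed (rule tau_step)
qed

lemma tau_less:
  assumes "admissible r a" "i < r"
  shows "tau r a i < r"
  using assms
proof (induction r arbitrary: a i rule: less_induct)
  case (less r)
  show ?case
  proof (cases "r = 1")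
    case True
    then show ?thesis
      using tau_r_eq_1[of a i] by simp
  next
    case False
    then have "1 < r" "0 < a" "a < r"
      using less.prems admissible_pos[of r a] by (auto simp: admissible_def)
    moreover have "tau (r - a) (aL r a) (i mod (r - a)) < r - a" if "a \<le> i"
      using that less.IH[OF _ admissible_left] \<open>1 < r\<close> \<open>0 < a\<close> \<open>a < r\<close> less.prems by simp
    moreover have "tau a (aR r a) i < a" if "i < a"
      using that less.IH[OF _ admissible_right] \<open>1 < r\<close> \<open>a < r\<close> less.prems by simp
    ultimately show ?thesis
      using tau_rec[OF less.prems(1) \<open>1 < r\<close> less.prems(2)] by (cases "a \<le> i") (simp_all, linarith)
  qed
qed

lemma tau_left_less:
  assumes "admissible r a" "1 < r" "i < r" "a \<le> i"
  shows "tau r a i < r - a"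
  using assms tau_rec[OF assms(1-3)] tau_less[OF admissible_left[OF assms(1,2)], of "i mod (r - a)"]
    admissible_pos[OF assms(1,2)] by simp

lemma tau_right_ge:
  assumes "admissible r a" "1 < r" "i < r" "i < a"
  shows "r - a \<le> tau r a i"
  using tau_rec[OF assms(1-3)] assms(4) by simp

section \<open>The divisors X, Y and Z\<close>

lemma sum_Ddiv:
  "finite A \<Longrightarrow> (\<Sum>k\<in>A. Ddiv k \<rho>) = (case \<rho> of None \<Rightarrow> 0 | Some m \<Rightarrow> if m \<in> A then 1 else 0)"
  by (cases \<rho>) (auto simp: Ddiv_def)

lemma Zdiv_None [simp]: "Zdiv r a i None = 0"
  by (simp add: Zdiv_def sum_Ddiv)

lemma Zdiv_Some [simp]: "Zdiv r a i (Some k) = (if tau r a i < k \<and> k \<le> r then 1 else 0)"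
  by (simp add: Zdiv_def sum_Ddiv)

lemma Ydiv_None [simp]: "Ydiv r a j None = 0"
  by (simp add: Ydiv_def sum_Ddiv)

lemma Ydiv_Some [simp]: "Ydiv r a j (Some k) = (if k \<le> tau r a ((j + a) mod r) then 1 else 0)"
  by (simp add: Ydiv_def sum_Ddiv)

lemma sum_mod_affine_reindex:
  fixes h :: "nat \<Rightarrow> 'b::comm_monoid_add"
  assumes "0 < r" "coprime a r"
  shows "(\<Sum>t<r. h ((t * a + c) mod r)) = (\<Sum>j<r. h j)"
proof -
  let ?f = "\<lambda>t. (t * a + c) mod r"
  have inj: "inj_on ?f {..<r}"
  proof (rule inj_onI)
    fix s t assume "s \<in> {..<r}" "t \<in> {..<r}" "?f s = ?f t"
    then have "[s * a + c = t * a + c] (mod r)"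
      by (simp add: cong_def)
    then have "[s * a = t * a] (mod r)"
      by (simp add: cong_add_rcancel_nat)
    then have "[s = t] (mod r)"
      using assms(2) cong_mult_rcancel_nat by blast
    then show "s = t"
      using \<open>s \<in> {..<r}\<close> \<open>t \<in> {..<r}\<close> by (simp add: cong_def)
  qed
  have "?f ` {..<r} = {..<r}"
    by (rule card_subset_eq) (auto simp: card_image[OF inj] assms(1))
  then show ?thesis
    using sum.reindex[OF inj, of h] by simp
qed

lemma mod_mult_inverse_cancel:
  fixes a b j r :: nat
  assumes "[a * b = 1] (mod r)" "j < r"
  shows "((j * b) mod r * a) mod r = j"
proof -
  have "[(j * b) mod r * a = j * b * a] (mod r)"
    by (simp add: cong_def mod_mult_left_eq)
  also have "j * b * a = j * (a * b)"
    by (simp add: ac_simps)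
  also have "[j * (a * b) = j * 1] (mod r)"
    using assms(1) by (rule cong_scalar_left)
  finally show ?thesis
    using assms(2) by (simp add: cong_def)
qed

text \<open>The difference equation \<open>x i - x (i - a) = f i\<close> on \<open>\<int>/r\<close>: since \<open>a\<close> generates \<open>\<int>/r\<close>,
  a solution is determined by \<open>x 0\<close>, and it exists iff \<open>f\<close> sums to zero over a period.\<close>

lemma cyclic_difference_unique:
  fixes x y :: "nat \<Rightarrow> int"
  assumes "coprime r a" "a < r" "x 0 = y 0"
    and "\<And>i. i < r \<Longrightarrow> x i - x ((i + r - a) mod r) = y i - y ((i + r - a) mod r)"
    and "i < r"
  shows "x i = y i"
proof -
  define d where "d i = x i - y i" for i
  have d_multiple: "d ((n * (r - a)) mod r) = d 0" for n
  proof (induction n)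
    case (Suc n)
    let ?i = "(n * (r - a)) mod r"
    have "(?i + r - a) mod r = (?i + (r - a)) mod r"
      using assms(2) by simp
    also have "\<dots> = (n * (r - a) + (r - a)) mod r"
      by (rule mod_add_left_eq)
    finally have "(?i + r - a) mod r = (n * (r - a) + (r - a)) mod r" .
    then have "d ((Suc n * (r - a)) mod r) = d ?i"
      using assms(4)[of ?i] assms(5) unfolding d_def by (simp add: add.commute)
    then show ?case
      using Suc by simp
  qed simp
  have "coprime (r - a) r"
    using coprime_diff_right[OF assms(1)] assms(2) by (simp add: coprime_commute)
  then obtain t where "[(r - a) * t = 1] (mod r)"
    using cong_solve_coprime_nat by auto
  then have "((i * t) mod r * (r - a)) mod r = i"
    using assms(5) by (rule mod_mult_inverse_cancel)
  then show ?thesis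
    using d_multiple[of "(i * t) mod r"] assms(3) unfolding d_def by simp
qed

lemma cyclic_difference_solvable:
  fixes f :: "nat \<Rightarrow> int"
  assumes "coprime r a" "a < r" "(\<Sum>i<r. f i) = 0"
  shows "\<exists>x. x 0 = c \<and> (\<forall>i<r. x i = x ((i + r - a) mod r) + f i)"
proof -
  have r0: "0 < r"
    using assms(2) by simp
  obtain b where b: "[a * b = 1] (mod r)"
    using cong_solve_coprime_nat[of a r] assms(1) by (auto simp: coprime_commute)
  define x where "x i = c + (\<Sum>t < (i * b) mod r. f ((Suc t * a) mod r))" for i
  have full_period: "(\<Sum>t<r. f ((Suc t * a) mod r)) = 0"
    using sum_mod_affine_reindex[OF r0, of a f a] assms(1,3) by (simp add: coprime_commute add.commute)
  have "x i = x ((i + r - a) mod r) + f i" if "i < r" for i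
  proof -
    define j where "j = (i + r - a) mod r"
    define n where "n = (i * b) mod r"
    define m where "m = (j * b) mod r"
    have "m < r" "n < r"
      unfolding m_def n_def using r0 by simp_all
    have na: "(n * a) mod r = i"
      unfolding n_def using mod_mult_inverse_cancel[OF b that] .
    have "(m * a) mod r = j"
      unfolding m_def using mod_mult_inverse_cancel[OF b, of j] r0 by (simp add: j_def)
    then have "(Suc m * a) mod r = (j + a) mod r"
      using mod_add_left_eq[of "m * a" r a] by (simp add: add.commute)
    also have "\<dots> = (i + r) mod r"
      unfolding j_def using assms(2) by (simp add: mod_add_left_eq)
    also have "\<dots> = (n * a) mod r"
      using na that by simp
    finally have "[Suc m * a = n * a] (mod r)"
      by (simp add: cong_def)
    then have "[Suc m = n] (mod r)"
      using assms(1) cong_mult_rcancel_nat coprime_commute by blast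
    then have mn: "Suc m mod r = n"
      using \<open>n < r\<close> by (simp add: cong_def)
    show ?thesis
    proof (cases "n = 0")
      case False
      then have "Suc m \<noteq> r"
        using mn by auto
      then have "n = Suc m"
        using mn \<open>m < r\<close> by simp
      then show ?thesis
        using na unfolding x_def j_def m_def n_def by simp
    next
      case True
      have "Suc m = r"
        using mn \<open>m < r\<close> True by (metis Suc_lessI mod_less nat.distinct(1))
      have "i = 0"
        using na True by simp
      have last: "f ((Suc m * a) mod r) = f 0"
        using \<open>Suc m = r\<close> by simp
      have "0 = (\<Sum>t<Suc m. f ((Suc t * a) mod r))"
        using full_period \<open>Suc m = r\<close> by simp
      also have "\<dots> = (\<Sum>t<m. f ((Suc t * a) mod r)) + f 0"
        by (simp only: sum.lessThan_Suc last)
      finally have "x j = c - f 0"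
        unfolding x_def m_def[symmetric] by simp
      then show ?thesis
        using \<open>i = 0\<close> unfolding x_def j_def by simp
    qed
  qed
  moreover have "x 0 = c"
    unfolding x_def by simp
  ultimately show ?thesis
    by blast
qed

definition X_spec :: "nat \<Rightarrow> nat \<Rightarrow> (nat \<Rightarrow> divisor) \<Rightarrow> bool" where
  "X_spec r a X \<longleftrightarrow> X 0 = E1div
      \<and> (\<forall>i<r. \<forall>\<rho>. X i \<rho> + Zdiv r a ((i + 1) mod r) \<rho> = Zdiv r a i \<rho> + X ((i + r - a) mod r) \<rho>)
      \<and> (\<forall>i\<ge>r. X i = (\<lambda>_. 0))"

lemma X_spec_unique:
  assumes "admissible r a" "X_spec r a X" "X_spec r a Y"
  shows "X = Y"
proof (intro ext)
  fix i \<rho>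
  have r: "a < r" "coprime r a"
    using assms(1) by (auto simp: admissible_def)
  have "X j \<rho> - X ((j + r - a) mod r) \<rho> = Y j \<rho> - Y ((j + r - a) mod r) \<rho>" if "j < r" for j
  proof -
    have "X j \<rho> + Zdiv r a ((j + 1) mod r) \<rho> = Zdiv r a j \<rho> + X ((j + r - a) mod r) \<rho>"
      "Y j \<rho> + Zdiv r a ((j + 1) mod r) \<rho> = Zdiv r a j \<rho> + Y ((j + r - a) mod r) \<rho>"
      using assms(2,3) that unfolding X_spec_def by blast+
    then show ?thesis
      by linarith
  qed
  moreover have "X 0 \<rho> = Y 0 \<rho>" "\<not> i < r \<Longrightarrow> X i \<rho> = Y i \<rho>"
    using assms(2,3) by (simp_all add: X_spec_def)
  ultimately show "X i \<rho> = Y i \<rho>"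
    using cyclic_difference_unique[OF r(2,1), of "\<lambda>i. X i \<rho>" "\<lambda>i. Y i \<rho>" i] by blast
qed

lemma X_spec_exists:
  assumes "admissible r a"
  shows "\<exists>X. X_spec r a X"
proof -
  have r: "0 < r" "a < r" "coprime r a"
    using assms by (auto simp: admissible_def)
  define f where "f \<rho> i = Zdiv r a i \<rho> - Zdiv r a ((i + 1) mod r) \<rho>" for \<rho> i
  have "(\<Sum>i<r. f \<rho> i) = 0" for \<rho>
    using sum_mod_affine_reindex[OF r(1), of 1 "\<lambda>j. Zdiv r a j \<rho>" 1]
    by (simp add: f_def sum_subtractf)
  then have "\<forall>\<rho>. \<exists>x. x 0 = E1div \<rho> \<and> (\<forall>i<r. x i = x ((i + r - a) mod r) + f \<rho> i)"
    using cyclic_difference_solvable[OF r(3,2)] by blast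
  then obtain x where x: "\<And>\<rho>. x \<rho> 0 = E1div \<rho>"
    "\<And>\<rho> i. i < r \<Longrightarrow> x \<rho> i = x \<rho> ((i + r - a) mod r) + f \<rho> i"
    by metis
  define X where "X i \<rho> = (if i < r then x \<rho> i else 0)" for i \<rho>
  have "X 0 = E1div"
    using x(1) r(1) by (simp add: X_def fun_eq_iff)
  moreover have "X i \<rho> + Zdiv r a ((i + 1) mod r) \<rho> = Zdiv r a i \<rho> + X ((i + r - a) mod r) \<rho>"
    if "i < r" for i \<rho>
    using x(2)[OF that, of \<rho>] that r(1) by (simp add: X_def f_def)
  moreover have "X i = (\<lambda>_. 0)" if "r \<le> i" for i
    using that by (simp add: X_def fun_eq_iff)
  ultimately show ?thesis
    unfolding X_spec_def by blast
qed

lemma X_spec_Xdiv: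
  assumes "admissible r a"
  shows "X_spec r a (Xdiv r a)"
proof -
  have "\<exists>!X. X_spec r a X"
    using X_spec_exists[OF assms] X_spec_unique[OF assms] by blast
  moreover have "Xdiv r a = (THE X. X_spec r a X)"
    unfolding Xdiv_def X_spec_def by simp
  ultimately show ?thesis
    by (simp add: theI')
qed

lemma Xdiv_0: "admissible r a \<Longrightarrow> Xdiv r a 0 = E1div"
  using X_spec_Xdiv by (simp add: X_spec_def)

lemma Xdiv_rec:
  "admissible r a \<Longrightarrow> i < r \<Longrightarrow>
   Xdiv r a i \<rho> + Zdiv r a ((i + 1) mod r) \<rho> = Zdiv r a i \<rho> + Xdiv r a ((i + r - a) mod r) \<rho>"
  using X_spec_Xdiv unfolding X_spec_def by blast

lemma Xdiv_eqI:
  fixes g :: "nat \<Rightarrow> int"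
  assumes "admissible r a" "g 0 = E1div \<rho>"
    and "\<And>i. i < r \<Longrightarrow> g i + Zdiv r a ((i + 1) mod r) \<rho> = Zdiv r a i \<rho> + g ((i + r - a) mod r)"
    and "i < r"
  shows "Xdiv r a i \<rho> = g i"
proof (rule cyclic_difference_unique[of r a])
  show "coprime r a" "a < r"
    using assms(1) by (auto simp: admissible_def)
  show "Xdiv r a 0 \<rho> = g 0"
    using Xdiv_0[OF assms(1)] assms(2) by simp
  show "Xdiv r a j \<rho> - Xdiv r a ((j + r - a) mod r) \<rho> = g j - g ((j + r - a) mod r)" if "j < r" for j
    using Xdiv_rec[OF assms(1) that, of \<rho>] assms(3)[OF that] by simp
qed (rule assms(4))

section \<open>Restriction of the divisors to the two subfans\<close>

text \<open>The rays of the left subfan are those of \<open>\<Sigma>(r - a, aL r a)\<close> with unchanged indices; those of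
  the right subfan are the rays of \<open>\<Sigma>(a, aR r a)\<close> with \<open>p_k\<close> renamed \<open>p_(r - a + k)\<close>.\<close>

abbreviation ray_shift :: "nat \<Rightarrow> nat \<Rightarrow> nat option \<Rightarrow> nat option" where
  "ray_shift r a \<equiv> map_option ((+) (r - a))"

lemma rays_iff: "\<rho> \<in> rays r \<longleftrightarrow> \<rho> = None \<or> (\<exists>k. \<rho> = Some k \<and> k \<le> r)"
  unfolding rays_def by auto

lemma mod_add_diff_self:
  fixes a r i :: nat
  assumes "a \<le> r" "i < r"
  shows "(i + r - a) mod r = (if a \<le> i then i - a else i + r - a)"
proof (cases "a \<le> i")
  case True
  then have "i + r - a = (i - a) + r"
    by simp
  then have "(i + r - a) mod r = (i - a) mod r"
    by simp
  then show ?thesis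
    using True assms(2) by simp
qed (use assms in simp)

lemma Zdiv_left:
  assumes "admissible r a" "1 < r" "i < r" "\<rho> \<in> rays (r - a)"
  shows "Zdiv r a i \<rho> = (if a \<le> i then Zdiv (r - a) (aL r a) (i mod (r - a)) \<rho> else 0)"
  using assms tau_rec[OF assms(1-3)] tau_right_ge[OF assms(1-3)]
  by (cases "a \<le> i") (auto simp: rays_iff)

lemma Zdiv_right:
  assumes "admissible r a" "1 < r" "i < r" "\<rho> \<in> rays a"
  shows "Zdiv r a i (ray_shift r a \<rho>) =
     (if i < a then Zdiv a (aR r a) i \<rho> else if \<rho> = None then 0 else 1)"
proof (cases \<rho>)
  case (Some k)
  have "k \<le> a" "a < r"
    using Some assms(4) admissible_pos[OF assms(1,2)] by (simp_all add: rays_iff)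
  show ?thesis
  proof (cases "i < a")
    case False
    then have "tau r a i < r - a"
      using tau_left_less[OF assms(1-3)] by simp
    then show ?thesis
      using Some False \<open>k \<le> a\<close> \<open>a < r\<close> by (simp; linarith)
  qed (use Some tau_rec[OF assms(1-3)] \<open>k \<le> a\<close> \<open>a < r\<close> in auto)
qed simp

lemma Ydiv_left:
  assumes "admissible r a" "1 < r" "j < r - a"
  shows "Ydiv r a j \<rho> = Ydiv (r - a) (aL r a) j \<rho>"
proof -
  have "a < r"
    using assms(1) by (simp add: admissible_def)
  then have "(j + aL r a) mod (r - a) = (j + a) mod (r - a)"
    using mod_add_right_eq[of j a "r - a"] aL_eq_mod[of a r] by simp
  then have "tau r a ((j + a) mod r) = tau (r - a) (aL r a) ((j + aL r a) mod (r - a))"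
    using tau_rec[OF assms(1,2), of "j + a"] assms(3) by simp
  then show ?thesis
    by (cases \<rho>) simp_all
qed

lemma Ydiv_right:
  assumes "admissible r a" "1 < r" "i < a"
  shows "Ydiv r a (i + (r - a)) (ray_shift r a \<rho>) = Ydiv a (aR r a) ((i + (r - a)) mod a) \<rho>"
proof -
  have a: "0 < a" "a < r"
    using admissible_pos[OF assms(1,2)] by simp_all
  have "((i + (r - a)) mod a + aR r a) mod a = (i + a - aR r a + aR r a) mod a"
    unfolding add_diff_mod_aR[OF assms(1,2)] by (rule mod_add_left_eq)
  also have "\<dots> = i"
    using aR_less[OF assms(1,2)] assms(3) by simp
  finally have "((i + (r - a)) mod a + aR r a) mod a = i" .
  moreover have "(i + (r - a) + a) mod r = i" "tau r a i = (r - a) + tau a (aR r a) i"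
    using tau_rec[OF assms(1,2), of i] assms(3) a by simp_all
  ultimately show ?thesis
    by (cases \<rho>) simp_all
qed

lemma Zdiv_top_rays:
  assumes "admissible r a" "1 < r" "i < r"
  shows "Zdiv r a i (Some 0) = 0" "Zdiv r a i (Some r) = 1"
    "Zdiv r a i (Some (r - a)) = (if a \<le> i then 1 else 0)"
  using tau_less[OF assms(1,3)] tau_left_less[OF assms] tau_right_ge[OF assms]
  by (cases "a \<le> i"; simp)+

lemma Xdiv_top_rays:
  assumes "admissible r a" "1 < r" "i < r"
  shows "Xdiv r a i (Some 0) = 0" "Xdiv r a i (Some r) = 0"
    "i < r - 1 \<Longrightarrow> Xdiv r a i (Some (r - a)) = 0"
proof -
  have a: "0 < a" "a < r"
    using admissible_pos[OF assms(1,2)] by simp_all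
  have mr: "(j + 1) mod r < r" for j
    using assms(2) by simp
  show "Xdiv r a i (Some 0) = 0" "Xdiv r a i (Some r) = 0"
    by (rule Xdiv_eqI[OF assms(1) _ _ assms(3), where g = "\<lambda>_. 0"];
        simp add: E1div_def tau_less[OF assms(1)] mr)+
  assume "i < r - 1"
  have "Xdiv r a i (Some (r - a)) = (if i = r - 1 then 1 else 0)"
  proof (rule Xdiv_eqI[OF assms(1) _ _ assms(3)])
    fix j assume j: "j < r"
    show "(if j = r - 1 then 1 else 0) + Zdiv r a ((j + 1) mod r) (Some (r - a)) =
          Zdiv r a j (Some (r - a)) + (if (j + r - a) mod r = r - 1 then 1 else 0)"
      using Zdiv_top_rays(3)[OF assms(1,2) j] Zdiv_top_rays(3)[OF assms(1,2) mr[of j]]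
        mod_add_diff_self[of a r j] a j by (cases "j + 1 = r") auto
  qed (use assms(2) in \<open>simp add: E1div_def\<close>)
  then show "Xdiv r a i (Some (r - a)) = 0"
    using \<open>i < r - 1\<close> by simp
qed

text \<open>How the child's solution of the recurrence for \<open>X\<close> extends to the parent's, on the rays of
  the left subfan: the extension agrees with the child's \<open>X\<close> except at \<open>r - 1\<close>, where the
  recurrence forces a correction term.\<close>

lemma cyclic_recurrence_left_extension:
  fixes X' Z' Z g :: "nat \<Rightarrow> int"
  assumes a: "0 < a" "0 < rp" "a + rp = r" and s: "s < rp" "a mod rp = s"
    and rec': "\<And>n. n < rp \<Longrightarrow> X' n + Z' ((n + 1) mod rp) = Z' n + X' ((n + rp - s) mod rp)"
    and Z: "\<And>i. i < r \<Longrightarrow> Z i = (if a \<le> i then Z' (i mod rp) else 0)"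
    and g: "\<And>i. g i = (if i = r - 1 then X' (rp - 1) + Z' ((r - 1) mod rp) else X' (i mod rp))"
    and i: "i < r"
  shows "g i + Z ((i + 1) mod r) = Z i + g ((i + r - a) mod r)"
proof -
  have ms: "(i + r - a) mod r = (if a \<le> i then i - a else i + r - a)"
    using mod_add_diff_self[of a r i] a i by simp
  consider "i = r - 1" | "a \<le> i" "i < r - 1" | "i + 1 < a" | "i + 1 = a"
    using i by linarith
  then show ?thesis
  proof cases
    case 1
    then have "(i + 1) mod r = 0" "(i + r - a) mod r = rp - 1" "rp - 1 \<noteq> r - 1"
      using ms a by auto
    then show ?thesis
      using 1 Z[OF i] Z[of 0] a unfolding g by simp
  next
    case 2
    have "(i mod rp + rp - s) mod rp = (i - a) mod rp"
    proof (rule mod_add_diff_eq_of_add[OF s(1)])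
      have "(i - a + s) mod rp = (i - a + a) mod rp"
        using s(2) by (metis mod_add_right_eq)
      then show "(i - a + s) mod rp = i mod rp mod rp"
        using 2 by simp
    qed
    then have "X' (i mod rp) + Z' ((i + 1) mod rp) = Z' (i mod rp) + X' ((i - a) mod rp)"
      using rec'[of "i mod rp"] a(2) mod_add_left_eq[of i rp 1] by simp
    then show ?thesis
      using 2 ms Z[OF i] Z[of "i + 1"] unfolding g by simp
  next
    case 3
    then have "(i + r - a) mod r = i + rp" "i + rp \<noteq> r - 1" "i \<noteq> r - 1"
      using ms a by auto
    then show ?thesis
      using 3 Z[OF i] Z[of "i + 1"] a unfolding g by simp
  next
    case 4
    have "r - 1 = i + rp"
      using 4 a by simp
    have "(i mod rp + 1) mod rp = s"
      using 4 s(2) mod_add_left_eq[of i rp 1] by simp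
    moreover have "(i mod rp + rp - s) mod rp = rp - 1"
    proof -
      have "(rp - 1 + s) mod rp = (rp - 1 + a) mod rp"
        using s(2) by (metis mod_add_right_eq)
      also have "rp - 1 + a = i + rp"
        using 4 a(2) by simp
      finally show ?thesis
        using mod_add_diff_eq_of_add[OF s(1), of "rp - 1" "i mod rp"] a(2) by simp
    qed
    ultimately have "X' (i mod rp) + Z' s = Z' (i mod rp) + X' (rp - 1)"
      using rec'[of "i mod rp"] a(2) by simp
    moreover have "(r - 1) mod rp = i mod rp"
      using \<open>r - 1 = i + rp\<close> by simp
    moreover have "(i + r - a) mod r = r - 1" "i \<noteq> r - 1" "(i + 1) mod r = a"
      using 4 ms a by auto
    ultimately show ?thesis
      using 4 Z[OF i] Z[of a] a s(2) unfolding g by simp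
  qed
qed

lemma cyclic_recurrence_right_extension:
  fixes X' Z' Z g :: "nat \<Rightarrow> int"
  assumes a: "0 < a" "0 < rp" "a + rp = r"
    and shift: "\<And>x. (x + rp) mod a = (x + a - s) mod a"
    and rec': "\<And>n. n < a \<Longrightarrow> X' n + Z' ((n + 1) mod a) = Z' n + X' ((n + a - s) mod a)"
    and Z: "\<And>i. i < r \<Longrightarrow> Z i = (if i < a then Z' i else c)"
    and g: "\<And>i. g i = (if i = r - 1 then X' ((r - 1) mod a) + c - Z' 0 else X' (i mod a))"
    and i: "i < r"
  shows "g i + Z ((i + 1) mod r) = Z i + g ((i + r - a) mod r)"
proof -
  have ms: "(i + r - a) mod r = (if a \<le> i then i - a else i + r - a)"
    using mod_add_diff_self[of a r i] a i by simp
  consider "i = r - 1" | "a \<le> i" "i < r - 1" | "i + 1 < a" | "i + 1 = a"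
    using i by linarith
  then show ?thesis
  proof cases
    case 1
    have "r - 1 = (rp - 1) + a"
      using a by simp
    then have "(r - 1) mod a = (rp - 1) mod a"
      by simp
    moreover have "(i + 1) mod r = 0" "(i + r - a) mod r = rp - 1" "rp - 1 \<noteq> r - 1" "\<not> r - 1 < a"
      using 1 ms a by auto
    ultimately show ?thesis
      using 1 Z[OF i] Z[of 0] a unfolding g by simp
  next
    case 2
    have "i = (i - a) + a"
      using 2 by simp
    then have "(i - a) mod a = i mod a"
      by (metis mod_add_self2)
    moreover have "(i + 1) mod r = i + 1" "(i + r - a) mod r = i - a" "i - a \<noteq> r - 1"
      using 2 ms by auto
    ultimately show ?thesis
      using 2 Z[OF i] Z[of "i + 1"] unfolding g by simp
  next
    case 3
    have "X' i + Z' (i + 1) = Z' i + X' ((i + rp) mod a)"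
      using rec'[of i] 3 shift[of i] by simp
    moreover have "(i + 1) mod r = i + 1" "(i + r - a) mod r = i + rp" "i + rp \<noteq> r - 1" "i \<noteq> r - 1"
      using 3 ms a by auto
    ultimately show ?thesis
      using 3 a Z[OF i] Z[of "i + 1"] unfolding g by simp
  next
    case 4
    have "r - 1 = i + rp"
      using 4 a by simp
    then have "X' i + Z' 0 = Z' i + X' ((r - 1) mod a)"
      using rec'[of i] 4 shift[of i] by simp
    moreover have "(i + 1) mod r = a" "(i + r - a) mod r = r - 1" "i \<noteq> r - 1"
      using 4 ms a by auto
    ultimately show ?thesis
      using 4 Z[OF i] Z[of a] a unfolding g by simp
  qed
qed

lemma Xdiv_left:
  assumes adm: "admissible r a" and r1: "1 < r" and j: "j < r - a - 1" and \<rho>: "\<rho> \<in> rays (r - a)"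
  shows "Xdiv r a j \<rho> = Xdiv (r - a) (aL r a) j \<rho>"
proof -
  define rp where "rp = r - a"
  define s where "s = aL r a"
  have adm': "admissible rp s"
    unfolding rp_def s_def using admissible_left[OF adm r1] .
  have a: "0 < a" "0 < rp" "a + rp = r" "s < rp" "a mod rp = s"
    using admissible_pos[OF adm r1] adm' aL_eq_mod[of a r]
    unfolding rp_def s_def by (auto simp: admissible_def)
  define X' where "X' n = Xdiv rp s n \<rho>" for n
  define Z' where "Z' n = Zdiv rp s n \<rho>" for n
  define g where "g i = (if i = r - 1 then X' (rp - 1) + Z' ((r - 1) mod rp) else X' (i mod rp))" for i
  have "Xdiv r a j \<rho> = g j"
  proof (rule Xdiv_eqI[OF adm])
    show "g 0 = E1div \<rho>"
      unfolding g_def X'_def using r1 Xdiv_0[OF adm'] by simp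
    show "j < r"
      using j by simp
    show "g i + Zdiv r a ((i + 1) mod r) \<rho> = Zdiv r a i \<rho> + g ((i + r - a) mod r)" if "i < r" for i
    proof (rule cyclic_recurrence_left_extension[where X' = X' and Z' = Z' and g = g
          and Z = "\<lambda>i. Zdiv r a i \<rho>", OF a _ _ g_def that])
      show "X' n + Z' ((n + 1) mod rp) = Z' n + X' ((n + rp - s) mod rp)" if "n < rp" for n
        unfolding X'_def Z'_def using Xdiv_rec[OF adm' that] .
      show "Zdiv r a i \<rho> = (if a \<le> i then Z' (i mod rp) else 0)" if "i < r" for i
        unfolding Z'_def rp_def s_def using Zdiv_left[OF adm r1 that \<rho>] .
    qed
  qed
  moreover have "j \<noteq> r - 1" "j mod rp = j"
    using j unfolding rp_def by auto
  ultimately show ?thesis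
    unfolding g_def X'_def rp_def s_def by simp
qed

lemma Xdiv_right:
  assumes adm: "admissible r a" and r1: "1 < r" and j: "j < a - 1" and \<rho>: "\<rho> \<in> rays a"
  shows "Xdiv r a j (ray_shift r a \<rho>) = Xdiv a (aR r a) j \<rho>"
proof -
  define rp where "rp = r - a"
  define s where "s = aR r a"
  have a: "0 < a" "0 < rp" "a + rp = r"
    using admissible_pos[OF adm r1] unfolding rp_def by auto
  have adm': "admissible a s"
    unfolding s_def using admissible_right[OF adm r1] .
  define X' where "X' n = Xdiv a s n \<rho>" for n
  define Z' where "Z' n = Zdiv a s n \<rho>" for n
  define c :: int where "c = (if \<rho> = None then 0 else 1)"
  define g where "g i = (if i = r - 1 then X' ((r - 1) mod a) + c - Z' 0 else X' (i mod a))" for i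
  have "Xdiv r a j (ray_shift r a \<rho>) = g j"
  proof (rule Xdiv_eqI[OF adm])
    have "E1div (ray_shift r a \<rho>) = E1div \<rho>"
      unfolding E1div_def by (cases \<rho>) auto
    then show "g 0 = E1div (ray_shift r a \<rho>)"
      unfolding g_def X'_def using r1 Xdiv_0[OF adm'] by simp
    show "j < r"
      using j a by simp
    show "g i + Zdiv r a ((i + 1) mod r) (ray_shift r a \<rho>) =
        Zdiv r a i (ray_shift r a \<rho>) + g ((i + r - a) mod r)" if "i < r" for i
    proof (rule cyclic_recurrence_right_extension[where X' = X' and Z' = Z' and g = g
          and Z = "\<lambda>i. Zdiv r a i (ray_shift r a \<rho>)", OF a _ _ _ g_def that])
      show "(x + rp) mod a = (x + a - s) mod a" for x
        unfolding rp_def s_def by (rule add_diff_mod_aR[OF adm r1])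
      show "X' n + Z' ((n + 1) mod a) = Z' n + X' ((n + a - s) mod a)" if "n < a" for n
        unfolding X'_def Z'_def using Xdiv_rec[OF adm' that] .
      show "Zdiv r a i (ray_shift r a \<rho>) = (if i < a then Z' i else c)" if "i < r" for i
        unfolding Z'_def s_def c_def using Zdiv_right[OF adm r1 that \<rho>] .
    qed
  qed
  moreover have "j \<noteq> r - 1" "j mod a = j"
    using j a by auto
  ultimately show ?thesis
    unfolding g_def X'_def s_def by simp
qed

section \<open>The Danilov fan\<close>

lemma vec3_eqI: "c1 u = c1 v \<Longrightarrow> c2 u = c2 v \<Longrightarrow> c3 u = c3 v \<Longrightarrow> u = (v::vec3)"
  by (cases u, cases v) (simp add: c1_def c2_def c3_def)

lemma c_lin3:
  "c1 (lin3 u v w x) = c1 x * c1 u + c2 x * c1 v + c3 x * c1 w"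
  "c2 (lin3 u v w x) = c1 x * c2 u + c2 x * c2 v + c3 x * c2 w"
  "c3 (lin3 u v w x) = c1 x * c3 u + c2 x * c3 v + c3 x * c3 w"
  by (simp_all add: lin3_def c1_def c2_def c3_def)

lemma c_unit_vectors:
  "c1 e1 = 1" "c2 e1 = 0" "c3 e1 = 0" "c1 e2 = 0" "c2 e2 = 1" "c3 e2 = 0" "c1 e3 = 0" "c2 e3 = 0" "c3 e3 = 1"
  by (simp_all add: e1_def e2_def e3_def c1_def c2_def c3_def)

lemma c_pvec:
  "c1 (pvec r a k) = of_int ((- int k * binv r a) mod int r) / of_nat r"
  "c2 (pvec r a k) = (of_nat r - of_nat k) / of_nat r"
  "c3 (pvec r a k) = of_nat k / of_nat r"
  by (simp_all add: pvec_def c1_def c2_def c3_def)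

lemma lin3_e1: "lin3 e1 v w e1 = e1"
  by (rule vec3_eqI) (simp_all add: c_lin3 c_unit_vectors)

lemma pvec_0: "0 < r \<Longrightarrow> pvec r a 0 = e2"
  by (rule vec3_eqI) (simp_all add: c_pvec c_unit_vectors)

lemma pvec_r: "0 < r \<Longrightarrow> pvec r a r = e3"
  by (rule vec3_eqI) (simp_all add: c_pvec c_unit_vectors)

lemma rayvec_simps [simp]: "rayvec r a None = e1" "rayvec r a (Some k) = pvec r a k"
  by (simp_all add: rayvec_def)

lemma rayvec_inj:
  assumes "0 < r" "\<rho> \<in> rays r" "\<rho>' \<in> rays r" "rayvec r a \<rho> = rayvec r a \<rho>'"
  shows "\<rho> = \<rho>'"
proof -
  have "pvec r a k \<noteq> e1" for k
  proof
    assume "pvec r a k = e1"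
    then have "c2 (pvec r a k) = 0" "c3 (pvec r a k) = 0"
      by (simp_all add: c_unit_vectors)
    then show False
      using assms(1) by (simp add: c_pvec)
  qed
  moreover have "k = k'" if "pvec r a k = pvec r a k'" for k k'
    using arg_cong[OF that, of c3] assms(1) by (simp add: c_pvec)
  ultimately show ?thesis
    using assms(4) by (cases \<rho>; cases \<rho>') (auto dest: sym)
qed

lemma binv_cong:
  assumes "admissible r a"
  shows "[int a * binv r a = 1] (mod int r)"
proof -
  have "coprime (int a) (int r)"
    using assms by (simp add: admissible_def coprime_commute)
  then have "\<exists>b. [int a * b = 1] (mod int r)"
    by (rule cong_solve_coprime_int)
  then show ?thesis
    unfolding binv_def by (rule someI_ex)
qed

lemma c1_pvec_r_minus_a:
  assumes "admissible r a" "1 < r"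
  shows "c1 (pvec r a (r - a)) = 1 / of_nat r"
proof -
  have "a < r"
    using assms by (simp add: admissible_def)
  then have "[- int (r - a) * binv r a = int a * binv r a - int r * binv r a] (mod int r)"
    by (simp add: of_nat_diff algebra_simps)
  also have "[int a * binv r a - int r * binv r a = 1 - 0] (mod int r)"
    using binv_cong[OF assms(1)] by (intro cong_diff) (simp_all add: cong_mult_self_left)
  finally have "(- int (r - a) * binv r a) mod int r = 1"
    using assms(2) by (simp add: cong_def)
  then show ?thesis
    by (simp add: c_pvec)
qed

lemma cong_coprime_imp_eq:
  fixes m n x y :: int
  assumes "coprime m n" "[x = y] (mod m)" "[x = y] (mod n)"
    and "0 \<le> x" "x < m * n" "0 \<le> y" "y < m * n"
  shows "x = y"
  using assms cong_less_imp_eq_int coprime_cong_mult by blast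

text \<open>The integer identities behind the first coordinates of \<open>L(p'_k) = p_k\<close> and
  \<open>R(p'_k) = p_(r - a + k)\<close>: both sides agree modulo the two coprime moduli and are bounded.\<close>

lemma left_map_c1_int_eq:
  assumes adm: "admissible r a" and r1: "1 < r" and k: "k \<le> r - a"
  shows "int r * ((- int k * binv (r - a) (aL r a)) mod int (r - a)) + int k
       = int (r - a) * ((- int k * binv r a) mod int r)"
    (is "int r * ?U + int k = int ?m * ?V")
proof (rule cong_coprime_imp_eq)
  have a: "0 < a" "a < r"
    using admissible_pos[OF adm r1] by simp_all
  have adm': "admissible ?m (aL r a)"
    using admissible_left[OF adm r1] .
  have "coprime ?m r"
    using coprime_diff_right[of r a] adm a by (simp add: admissible_def coprime_commute)
  then show "coprime (int ?m) (int r)"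
    by (simp only: coprime_int_iff)
  have "[int r * ?U + int k = int (aL r a) * (- int k * binv ?m (aL r a)) + int k] (mod int ?m)"
    by (intro cong_add cong_mult) (simp_all add: cong_def of_nat_mod)
  also have "int (aL r a) * (- int k * binv ?m (aL r a)) + int k
      = int k * (1 - int (aL r a) * binv ?m (aL r a))"
    by (simp add: algebra_simps)
  also have "[\<dots> = int k * (1 - 1)] (mod int ?m)"
    using binv_cong[OF adm'] by (intro cong_scalar_left cong_diff) simp_all
  also have "[int k * (1 - 1) = int ?m * ?V] (mod int ?m)"
    by (simp add: cong_def)
  finally show "[int r * ?U + int k = int ?m * ?V] (mod int ?m)" .
  have "[int ?m * ?V = int r * ?V - int a * ?V] (mod int r)"
    using a by (simp add: of_nat_diff algebra_simps)
  also have "[int r * ?V - int a * ?V = 0 - int a * (- int k * binv r a)] (mod int r)"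
    by (intro cong_diff cong_scalar_left) (simp_all add: cong_mult_self_left)
  also have "0 - int a * (- int k * binv r a) = int k * (int a * binv r a)"
    by (simp add: algebra_simps)
  also have "[\<dots> = int k * 1] (mod int r)"
    using binv_cong[OF adm] by (rule cong_scalar_left)
  also have "[int k * 1 = int r * ?U + int k] (mod int r)"
    by (simp add: cong_def)
  finally show "[int r * ?U + int k = int ?m * ?V] (mod int r)"
    by (rule cong_sym)
  have U: "0 \<le> ?U" "?U < int ?m" and V: "0 \<le> ?V" "?V < int r"
    using a by simp_all
  have "int r * ?U \<le> int r * (int ?m - 1)"
    using U by (intro mult_left_mono) auto
  moreover have "int r * (int ?m - 1) = int ?m * int r - int r" "int k \<le> int ?m" "int ?m < int r"
    using k a by (simp_all add: algebra_simps)
  ultimately show "int r * ?U + int k < int ?m * int r"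
    by linarith
  show "0 \<le> int r * ?U + int k"
    using U k by simp
  show "0 \<le> int ?m * ?V" "int ?m * ?V < int ?m * int r"
    using V a by simp_all
qed

lemma right_map_c1_int_eq:
  assumes adm: "admissible r a" and r1: "1 < r" and k: "k \<le> a"
  shows "int r * ((- int k * binv a (aR r a)) mod int a) + (int a - int k)
       = int a * ((- int (r - a + k) * binv r a) mod int r)"
    (is "int r * ?U + (int a - int k) = int a * ?V")
proof (rule cong_coprime_imp_eq)
  have a: "0 < a" "a < r"
    using admissible_pos[OF adm r1] by simp_all
  have adm': "admissible a (aR r a)"
    using admissible_right[OF adm r1] .
  show "coprime (int a) (int r)"
    using adm by (simp add: admissible_def coprime_commute)
  have "int a dvd int r - (- int (aR r a))"
    using dvd_add_aR[OF adm r1] by (metis diff_minus_eq_add int_dvd_int_iff of_nat_add)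
  then have "[int r = - int (aR r a)] (mod int a)"
    by (simp only: cong_iff_dvd_diff)
  then have "[int r * ?U + (int a - int k)
      = - int (aR r a) * (- int k * binv a (aR r a)) + (0 - int k)] (mod int a)"
    by (intro cong_add cong_mult cong_diff) (simp_all add: cong_def)
  also have "- int (aR r a) * (- int k * binv a (aR r a)) + (0 - int k)
      = int k * (int (aR r a) * binv a (aR r a) - 1)"
    by (simp add: algebra_simps)
  also have "[\<dots> = int k * (1 - 1)] (mod int a)"
    using binv_cong[OF adm'] by (intro cong_scalar_left cong_diff) simp_all
  also have "[int k * (1 - 1) = int a * ?V] (mod int a)"
    by (simp add: cong_def)
  finally show "[int r * ?U + (int a - int k) = int a * ?V] (mod int a)" .
  have "[int a * ?V = int a * (- int (r - a + k) * binv r a)] (mod int r)"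
    by (intro cong_scalar_left) simp
  also have "int a * (- int (r - a + k) * binv r a)
      = (int a - int k) * (int a * binv r a) - int r * (int a * binv r a)"
    using a by (simp add: of_nat_diff algebra_simps)
  also have "[\<dots> = (int a - int k) * 1 - 0] (mod int r)"
    using binv_cong[OF adm] by (intro cong_diff cong_scalar_left) (simp_all add: cong_mult_self_left)
  also have "[(int a - int k) * 1 - 0 = int r * ?U + (int a - int k)] (mod int r)"
    by (simp add: cong_def)
  finally show "[int r * ?U + (int a - int k) = int a * ?V] (mod int r)"
    by (rule cong_sym)
  have U: "0 \<le> ?U" "?U < int a" and V: "0 \<le> ?V" "?V < int r"
    using a by simp_all
  have "int r * ?U \<le> int r * (int a - 1)"
    using U by (intro mult_left_mono) auto
  moreover have "int r * (int a - 1) = int a * int r - int r" "int k \<le> int a" "int a < int r"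
    using k a by (simp_all add: algebra_simps)
  ultimately show "int r * ?U + (int a - int k) < int a * int r"
    by linarith
  show "0 \<le> int r * ?U + (int a - int k)"
    using U k by simp
  show "0 \<le> int a * ?V" "int a * ?V < int a * int r"
    using V a by simp_all
qed

abbreviation left_map :: "nat \<Rightarrow> nat \<Rightarrow> vec3 \<Rightarrow> vec3" where
  "left_map r a \<equiv> lin3 e1 e2 (pvec r a (r - a))"

abbreviation right_map :: "nat \<Rightarrow> nat \<Rightarrow> vec3 \<Rightarrow> vec3" where
  "right_map r a \<equiv> lin3 e1 (pvec r a (r - a)) e3"

lemma left_map_pvec:
  assumes adm: "admissible r a" and r1: "1 < r" and k: "k \<le> r - a"
  shows "left_map r a (pvec (r - a) (aL r a) k) = pvec r a k"
proof (rule vec3_eqI)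
  have a: "0 < a" "a < r"
    using admissible_pos[OF adm r1] by simp_all
  then have nz: "(of_nat (r - a) :: rat) \<noteq> 0" "(of_nat r :: rat) \<noteq> 0"
    by simp_all
  define U where "U = (- int k * binv (r - a) (aL r a)) mod int (r - a)"
  define V where "V = (- int k * binv r a) mod int r"
  have "of_int (int r * U + int k) = (of_int (int (r - a) * V) :: rat)"
    using left_map_c1_int_eq[OF adm r1 k] unfolding U_def V_def by simp
  then have key: "of_nat r * (of_int U :: rat) + of_nat k = of_nat (r - a) * of_int V"
    by simp
  have "c1 (left_map r a (pvec (r - a) (aL r a) k))
      = c1 (pvec (r - a) (aL r a) k) + c3 (pvec (r - a) (aL r a) k) * (1 / of_nat r)"
    by (simp add: c_lin3 c_unit_vectors c1_pvec_r_minus_a[OF adm r1])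
  also have "\<dots> = of_int U / of_nat (r - a) + of_nat k / of_nat (r - a) * (1 / of_nat r)"
    by (simp only: c_pvec U_def)
  also have "\<dots> = of_int V / of_nat r"
  proof -
    have "u / p + x / p * (1 / q) = v / q" if "q \<noteq> 0" "p \<noteq> 0" "q * u + x = p * v" for u v p q x :: rat
      using that by (simp add: field_simps)
    from this[OF nz(2,1) key] show ?thesis .
  qed
  finally show "c1 (left_map r a (pvec (r - a) (aL r a) k)) = c1 (pvec r a k)"
    by (simp only: c_pvec V_def)
  have "(p - x) / p + x / p * ((q - p) / q) = (q - x) / q" "x / p * (p / q) = x / q"
    if "q \<noteq> 0" "p \<noteq> 0" for p q x :: rat
    using that by (simp_all add: field_simps)
  then show "c2 (left_map r a (pvec (r - a) (aL r a) k)) = c2 (pvec r a k)"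
    "c3 (left_map r a (pvec (r - a) (aL r a) k)) = c3 (pvec r a k)"
    using nz
    by (simp_all only: c_lin3 c_unit_vectors c_pvec mult_zero_right mult_1_right add_0)
qed

lemma right_map_pvec:
  assumes adm: "admissible r a" and r1: "1 < r" and k: "k \<le> a"
  shows "right_map r a (pvec a (aR r a) k) = pvec r a (r - a + k)"
proof (rule vec3_eqI)
  have a: "0 < a" "a < r"
    using admissible_pos[OF adm r1] by simp_all
  then have nz: "(of_nat a :: rat) \<noteq> 0" "(of_nat r :: rat) \<noteq> 0"
    "(of_nat (r - a + k) :: rat) = of_nat r - of_nat a + of_nat k"
    by (simp_all add: of_nat_diff)
  define U where "U = (- int k * binv a (aR r a)) mod int a"
  define V where "V = (- int (r - a + k) * binv r a) mod int r"
  have "of_int (int r * U + (int a - int k)) = (of_int (int a * V) :: rat)"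
    using right_map_c1_int_eq[OF adm r1 k] unfolding U_def V_def by simp
  then have key: "of_nat r * (of_int U :: rat) + (of_nat a - of_nat k) = of_nat a * of_int V"
    by simp
  have "c1 (right_map r a (pvec a (aR r a) k))
      = c1 (pvec a (aR r a) k) + c2 (pvec a (aR r a) k) * (1 / of_nat r)"
    by (simp add: c_lin3 c_unit_vectors c1_pvec_r_minus_a[OF adm r1])
  also have "\<dots> = of_int U / of_nat a + (of_nat a - of_nat k) / of_nat a * (1 / of_nat r)"
    by (simp only: c_pvec U_def)
  also have "\<dots> = of_int V / of_nat r"
    using key nz by (simp add: field_simps)
  finally show "c1 (right_map r a (pvec a (aR r a) k)) = c1 (pvec r a (r - a + k))"
    by (simp only: c_pvec V_def)
  show "c2 (right_map r a (pvec a (aR r a) k)) = c2 (pvec r a (r - a + k))"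
    "c3 (right_map r a (pvec a (aR r a) k)) = c3 (pvec r a (r - a + k))"
    using nz a unfolding c_lin3 c_unit_vectors c_pvec by (simp_all add: of_nat_diff field_simps)
qed

lemma danilov_cones_rec:
  assumes "admissible r a" "1 < r"
  shows "danilov_cones r a = {{e2, e3, pvec r a (r - a)}}
        \<union> (\<lambda>C. left_map r a ` C) ` danilov_cones (r - a) (aL r a)
        \<union> (\<lambda>C. right_map r a ` C) ` danilov_cones a (aR r a)"
  using danilov_cones.simps[of r a] admissible_pos[OF assms] by simp

lemma danilov_cones_1: "danilov_cones 1 a = {{e1, e2, e3}}"
  using danilov_cones.simps[of 1 a] by simp

lemma left_map_rayvec:
  assumes "admissible r a" "1 < r" "\<rho> \<in> rays (r - a)"
  shows "left_map r a (rayvec (r - a) (aL r a) \<rho>) = rayvec r a \<rho>"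
  using assms left_map_pvec[OF assms(1,2)] by (cases \<rho>) (auto simp: lin3_e1 rays_iff)

lemma right_map_rayvec:
  assumes "admissible r a" "1 < r" "\<rho> \<in> rays a"
  shows "right_map r a (rayvec a (aR r a) \<rho>) = rayvec r a (ray_shift r a \<rho>)"
  using assms right_map_pvec[OF assms(1,2)] by (cases \<rho>) (auto simp: lin3_e1 rays_iff)

lemma danilov_cone_subset_rays:
  assumes "admissible r a" "\<sigma> \<in> danilov_cones r a"
  shows "\<sigma> \<subseteq> rayvec r a ` rays r"
  using assms
proof (induction r arbitrary: a \<sigma> rule: less_induct)
  case (less r)
  have r0: "0 < r"
    using less.prems by (simp add: admissible_def)
  have "e2 \<in> rayvec r a ` rays r"
    using r0 by (intro rev_image_eqI[of "Some 0"]) (simp_all add: rays_iff pvec_0)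
  moreover have "e3 \<in> rayvec r a ` rays r"
    using r0 by (intro rev_image_eqI[of "Some r"]) (simp_all add: rays_iff pvec_r)
  moreover have "pvec r a (r - a) \<in> rayvec r a ` rays r"
    by (intro rev_image_eqI[of "Some (r - a)"]) (simp_all add: rays_iff)
  ultimately have apex: "{e2, e3, pvec r a (r - a)} \<subseteq> rayvec r a ` rays r"
    by simp
  show ?case
  proof (cases "r = 1")
    case True
    then have "\<sigma> = {e1, e2, e3}"
      using less.prems(2) danilov_cones_1 by simp
    moreover have "e1 \<in> rayvec r a ` rays r"
      by (rule rev_image_eqI[of None]) (simp_all add: rays_iff)
    ultimately show ?thesis
      using apex by auto
  next
    case False
    then have r1: "1 < r"
      using r0 by simp
    have a: "0 < a" "a < r"
      using admissible_pos[OF less.prems(1) r1] by simp_all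
    have "left_map r a ` \<sigma>' \<subseteq> rayvec r a ` rays r"
      if "\<sigma>' \<in> danilov_cones (r - a) (aL r a)" for \<sigma>'
    proof -
      have "\<sigma>' \<subseteq> rayvec (r - a) (aL r a) ` rays (r - a)"
        using less.IH[OF _ admissible_left[OF less.prems(1) r1] that] a by simp
      moreover have "rays (r - a) \<subseteq> rays r"
        by (auto simp: rays_iff)
      ultimately show ?thesis
        using left_map_rayvec[OF less.prems(1) r1] by force
    qed
    moreover have "right_map r a ` \<sigma>' \<subseteq> rayvec r a ` rays r"
      if "\<sigma>' \<in> danilov_cones a (aR r a)" for \<sigma>'
    proof -
      have "\<sigma>' \<subseteq> rayvec a (aR r a) ` rays a"
        using less.IH[OF _ admissible_right[OF less.prems(1) r1] that] a by simp
      moreover have "ray_shift r a \<rho> \<in> rays r" if "\<rho> \<in> rays a" for \<rho>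
        using that a by (auto simp: rays_iff)
      ultimately show ?thesis
        using right_map_rayvec[OF less.prems(1) r1] by force
    qed
    ultimately show ?thesis
      using less.prems(2) apex unfolding danilov_cones_rec[OF less.prems(1) r1] by blast
  qed
qed

lemma distinguished_left_cone:
  assumes adm: "admissible r a" and r1: "1 < r" and \<sigma>': "\<sigma>' \<in> danilov_cones (r - a) (aL r a)"
    and zero: "\<And>\<rho>. \<rho> \<in> rays (r - a) \<Longrightarrow> rayvec (r - a) (aL r a) \<rho> \<in> \<sigma>' \<Longrightarrow> arrow_div r a \<alpha> \<rho> = 0"
  shows "distinguished r a (left_map r a ` \<sigma>') \<alpha>"
  unfolding distinguished_def
proof (intro ballI impI)
  fix \<rho> assume \<rho>: "\<rho> \<in> rays r" "rayvec r a \<rho> \<in> left_map r a ` \<sigma>'"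
  then obtain \<rho>' where \<rho>': "\<rho>' \<in> rays (r - a)" "rayvec (r - a) (aL r a) \<rho>' \<in> \<sigma>'"
    "rayvec r a \<rho> = left_map r a (rayvec (r - a) (aL r a) \<rho>')"
    using danilov_cone_subset_rays[OF admissible_left[OF adm r1] \<sigma>'] by blast
  moreover have "\<rho>' \<in> rays r"
    using \<rho>'(1) by (auto simp: rays_iff)
  ultimately have "\<rho> = \<rho>'"
    using rayvec_inj[of r \<rho> \<rho>' a] \<rho>(1) left_map_rayvec[OF adm r1] r1 by simp
  then show "arrow_div r a \<alpha> \<rho> = 0"
    using zero \<rho>' by simp
qed

lemma distinguished_right_cone:
  assumes adm: "admissible r a" and r1: "1 < r" and \<sigma>': "\<sigma>' \<in> danilov_cones a (aR r a)"
    and zero: "\<And>\<rho>. \<rho> \<in> rays a \<Longrightarrow> rayvec a (aR r a) \<rho> \<in> \<sigma>' \<Longrightarrow> arrow_div r a \<alpha> (ray_shift r a \<rho>) = 0"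
  shows "distinguished r a (right_map r a ` \<sigma>') \<alpha>"
  unfolding distinguished_def
proof (intro ballI impI)
  fix \<rho> assume \<rho>: "\<rho> \<in> rays r" "rayvec r a \<rho> \<in> right_map r a ` \<sigma>'"
  then obtain \<rho>' where \<rho>': "\<rho>' \<in> rays a" "rayvec a (aR r a) \<rho>' \<in> \<sigma>'"
    "rayvec r a \<rho> = right_map r a (rayvec a (aR r a) \<rho>')"
    using danilov_cone_subset_rays[OF admissible_right[OF adm r1] \<sigma>'] by blast
  moreover have "ray_shift r a \<rho>' \<in> rays r"
    using \<rho>'(1) admissible_pos[OF adm r1] by (auto simp: rays_iff)
  ultimately have "\<rho> = ray_shift r a \<rho>'"
    using rayvec_inj[of r \<rho> "ray_shift r a \<rho>'" a] \<rho>(1) right_map_rayvec[OF adm r1] r1 by simp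
  then show "arrow_div r a \<alpha> \<rho> = 0"
    using zero \<rho>' by simp
qed

section \<open>Connectivity of the distinguished arrows\<close>

definition distinguished_step :: "nat \<Rightarrow> nat \<Rightarrow> vec3 set \<Rightarrow> nat \<Rightarrow> nat \<Rightarrow> bool" where
  "distinguished_step r a \<sigma> i j \<longleftrightarrow>
     (\<exists>\<alpha>. quiver_arrow r \<alpha> \<and> \<alpha> \<noteq> ArrX (r - 1) \<and> distinguished r a \<sigma> \<alpha> \<and>
        arrow_tail \<alpha> = i \<and> arrow_head r a \<alpha> = j)"

abbreviation joined :: "nat \<Rightarrow> nat \<Rightarrow> vec3 set \<Rightarrow> nat \<Rightarrow> nat \<Rightarrow> bool" where
  "joined r a \<sigma> \<equiv> (symclp (distinguished_step r a \<sigma>))\<^sup>*\<^sup>*"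

lemma joined_arrow:
  "quiver_arrow r \<alpha> \<Longrightarrow> \<alpha> \<noteq> ArrX (r - 1) \<Longrightarrow> distinguished r a \<sigma> \<alpha> \<Longrightarrow>
   joined r a \<sigma> (arrow_tail \<alpha>) (arrow_head r a \<alpha>)"
  unfolding distinguished_step_def by (blast intro: symclpI1)

lemma symclp_connected_by_retraction:
  fixes R R' :: "nat \<Rightarrow> nat \<Rightarrow> bool"
  assumes retract: "\<And>w. w < r \<Longrightarrow> (symclp R)\<^sup>*\<^sup>* w (w mod m)"
    and lift: "\<And>x y. R' x y \<Longrightarrow> (symclp R)\<^sup>*\<^sup>* x y"
    and connected: "\<And>x y. x < m \<Longrightarrow> y < m \<Longrightarrow> (symclp R')\<^sup>*\<^sup>* x y"
    and "0 < m" "u < r" "v < r"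
  shows "(symclp R)\<^sup>*\<^sup>* u v"
proof -
  have step: "(symclp R)\<^sup>*\<^sup>* x y" if "symclp R' x y" for x y
    using that
  proof (cases rule: symclpE)
    case sym
    then show ?thesis
      by (rule rtranclp_symclp_sym[OF lift])
  qed (rule lift)
  have "(symclp R)\<^sup>*\<^sup>* x y" if "(symclp R')\<^sup>*\<^sup>* x y" for x y
    using that by (induction rule: rtranclp_induct) (auto intro: rtranclp_trans step)
  then have "(symclp R)\<^sup>*\<^sup>* (u mod m) (v mod m)"
    using connected \<open>0 < m\<close> by simp
  moreover have "(symclp R)\<^sup>*\<^sup>* u (u mod m)" "(symclp R)\<^sup>*\<^sup>* (v mod m) v"
    using retract[OF \<open>u < r\<close>] rtranclp_symclp_sym[OF retract[OF \<open>v < r\<close>]] .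
  ultimately show ?thesis
    using rtranclp_trans by metis
qed

lemma joined_top_cone:
  assumes adm: "admissible r a" and r1: "1 < r" and u: "u < r" and v: "v < r"
  shows "joined r a {e2, e3, pvec r a (r - a)} u v"
proof -
  have r0: "0 < r"
    using r1 by simp
  have apex: "\<rho> = Some 0 \<or> \<rho> = Some r \<or> \<rho> = Some (r - a)"
    if "\<rho> \<in> rays r" "rayvec r a \<rho> \<in> {e2, e3, pvec r a (r - a)}" for \<rho>
  proof -
    have "Some 0 \<in> rays r" "Some r \<in> rays r" "Some (r - a) \<in> rays r"
      by (simp_all add: rays_iff)
    moreover from that(2) consider "rayvec r a \<rho> = rayvec r a (Some 0)"
      | "rayvec r a \<rho> = rayvec r a (Some r)" | "rayvec r a \<rho> = rayvec r a (Some (r - a))"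
      using pvec_0[OF r0] pvec_r[OF r0] by force
    ultimately show ?thesis
      using rayvec_inj[OF r0 that(1)] by metis
  qed
  have "joined r a {e2, e3, pvec r a (r - a)} 0 i" if "i < r" for i
    using that
  proof (induction i)
    case (Suc i)
    have "distinguished r a {e2, e3, pvec r a (r - a)} (ArrX i)"
      unfolding distinguished_def
    proof (intro ballI impI)
      fix \<rho> assume "\<rho> \<in> rays r" "rayvec r a \<rho> \<in> {e2, e3, pvec r a (r - a)}"
      then have "\<rho> = Some 0 \<or> \<rho> = Some r \<or> \<rho> = Some (r - a)"
        by (rule apex)
      then show "arrow_div r a (ArrX i) \<rho> = 0"
        using Xdiv_top_rays[OF adm r1, of i] Suc.prems by auto
    qed
    then have "joined r a {e2, e3, pvec r a (r - a)} i (Suc i)"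
      using joined_arrow[of r "ArrX i"] Suc.prems by (simp add: quiver_arrow_def)
    then show ?case
      using Suc by (meson Suc_lessD rtranclp_trans)
  qed simp
  from this[OF u] this[OF v] show ?thesis
    using rtranclp_trans[OF rtranclp_symclp_sym] by metis
qed

text \<open>On a cone of the left subfan, \<open>z_i\<close> with \<open>i < a\<close> joins \<open>i\<close> to \<open>i + (r - a)\<close>.\<close>

lemma joined_mod_left:
  assumes adm: "admissible r a" and r1: "1 < r" and \<sigma>': "\<sigma>' \<in> danilov_cones (r - a) (aL r a)"
    and "w < r"
  shows "joined r a (left_map r a ` \<sigma>') w (w mod (r - a))"
  using \<open>w < r\<close>
proof (induction w rule: less_induct)
  case (less w)
  have a: "0 < a" "a < r"
    using admissible_pos[OF adm r1] by simp_all
  show ?case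
  proof (cases "w < r - a")
    case False
    define i where "i = w - (r - a)"
    have "w = i + (r - a)"
      using False unfolding i_def by simp
    then have "i mod (r - a) = w mod (r - a)"
      by simp
    moreover have "i < a" "i < w" "(i + r - a) mod r = w"
      using \<open>w = i + (r - a)\<close> less.prems a by auto
    ultimately have i: "i < a" "i < w" "(i + r - a) mod r = w" "i mod (r - a) = w mod (r - a)"
      by simp_all
    have "distinguished r a (left_map r a ` \<sigma>') (ArrZ i)"
      using Zdiv_left[OF adm r1, of i] i a by (intro distinguished_left_cone[OF adm r1 \<sigma>']) simp
    then have "joined r a (left_map r a ` \<sigma>') i w"
      using joined_arrow[of r "ArrZ i" a] i a by (simp add: quiver_arrow_def)
    moreover have "joined r a (left_map r a ` \<sigma>') i (w mod (r - a))"
      using less.IH[OF i(2)] i less.prems by simp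
    ultimately show ?thesis
      using rtranclp_trans[OF rtranclp_symclp_sym] by metis
  qed simp
qed

text \<open>The arrow \<open>z_j\<close> of the quiver of \<open>(r - a, aL r a)\<close> is realised by \<open>z_i\<close>, \<open>i \<equiv> j\<close> mod \<open>r - a\<close>.\<close>

lemma z_lift_index_left:
  fixes a r j :: nat
  assumes "a < r" "j < r - a"
  obtains i where "a \<le> i" "i < r" "i mod (r - a) = j"
    "(i + r - a) mod r = (j + (r - a) - aL r a) mod (r - a)"
proof
  define rp where "rp = r - a"
  define i where "i = a + (j + rp - aL r a) mod rp"
  have rp: "0 < rp" "a + rp = r" "aL r a < rp" "a mod rp = aL r a"
    using assms aL_eq_mod[of a r] unfolding rp_def by simp_all
  have "i mod rp = (aL r a + (j + rp - aL r a)) mod rp"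
    unfolding i_def using rp(4) by (metis mod_add_eq mod_mod_trivial)
  also have "\<dots> = (j + rp) mod rp"
    using rp(3) by simp
  also have "\<dots> = j"
    using assms(2) by (simp flip: rp_def)
  finally show "i mod (r - a) = j"
    unfolding rp_def .
  have m: "(j + rp - aL r a) mod rp < rp"
    using rp(1) by simp
  then show "a \<le> i" "i < r"
    unfolding i_def using rp(2) by linarith+
  have "(j + rp - aL r a) mod rp < r"
    using m rp(2) by linarith
  moreover have "i + r - a = (j + rp - aL r a) mod rp + r"
    unfolding i_def using assms(1) by simp
  ultimately show "(i + r - a) mod r = (j + (r - a) - aL r a) mod (r - a)"
    unfolding rp_def by simp
qed

text \<open>The arrow \<open>y_j\<close> of the quiver of \<open>(a, aR r a)\<close> is realised by \<open>y_(i + r - a)\<close>.\<close>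

lemma y_lift_index_right:
  assumes "admissible r a" "1 < r" "j < a"
  obtains i where "i < a" "(i + (r - a)) mod a = j" "(i + (r - a) + a) mod r = (j + aR r a) mod a"
proof
  define i where "i = (j + aR r a) mod a"
  have a: "0 < a" "a < r"
    using admissible_pos[OF assms(1,2)] by simp_all
  show "i < a"
    unfolding i_def using a(1) by simp
  then show "(i + (r - a) + a) mod r = (j + aR r a) mod a"
    using a unfolding i_def[symmetric] by simp
  show "(i + (r - a)) mod a = j"
    using add_diff_mod_aR[OF assms(1,2), of i] mod_add_diff_eq_of_add[OF aR_less[OF assms(1,2)], of j i]
      assms(3) unfolding i_def by simp
qed

lemma joined_left_lift:
  assumes adm: "admissible r a" and r1: "1 < r" and \<sigma>': "\<sigma>' \<in> danilov_cones (r - a) (aL r a)"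
    and step: "distinguished_step (r - a) (aL r a) \<sigma>' x y"
  shows "joined r a (left_map r a ` \<sigma>') x y"
proof -
  define rp where "rp = r - a"
  define s where "s = aL r a"
  let ?\<sigma> = "left_map r a ` \<sigma>'"
  obtain \<alpha> where \<alpha>: "quiver_arrow rp \<alpha>" "\<alpha> \<noteq> ArrX (rp - 1)" "distinguished rp s \<sigma>' \<alpha>"
    "arrow_tail \<alpha> = x" "arrow_head rp s \<alpha> = y"
    using step unfolding distinguished_step_def rp_def s_def by blast
  have a: "0 < a" "a < r" "a mod rp = s"
    using admissible_pos[OF adm r1] aL_eq_mod[of a r] unfolding rp_def s_def by simp_all
  have dist: "distinguished r a ?\<sigma> \<beta>"
    if "\<And>\<rho>. \<rho> \<in> rays rp \<Longrightarrow> arrow_div r a \<beta> \<rho> = arrow_div rp s \<alpha> \<rho>" for \<beta>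
  proof (rule distinguished_left_cone[OF adm r1 \<sigma>'])
    fix \<rho> assume "\<rho> \<in> rays (r - a)" "rayvec (r - a) (aL r a) \<rho> \<in> \<sigma>'"
    then show "arrow_div r a \<beta> \<rho> = 0"
      using \<alpha>(3) that unfolding distinguished_def rp_def s_def by simp
  qed
  have retract: "joined r a ?\<sigma> w (w mod rp)" if "w < r" for w
    unfolding rp_def using joined_mod_left[OF adm r1 \<sigma>' that] .
  show ?thesis
  proof (cases \<alpha>)
    case (ArrX j)
    then have "j < rp - 1"
      using \<alpha>(1,2) by (auto simp: quiver_arrow_def)
    then have "distinguished r a ?\<sigma> (ArrX j)"
      using Xdiv_left[OF adm r1] ArrX by (intro dist) (simp add: rp_def s_def)
    then show ?thesis
      using joined_arrow[of r "ArrX j" a] \<alpha>(4,5) ArrX \<open>j < rp - 1\<close> a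
      unfolding rp_def by (simp add: quiver_arrow_def)
  next
    case (ArrY j)
    then have "j < rp"
      using \<alpha>(1) by (simp add: quiver_arrow_def)
    then have "distinguished r a ?\<sigma> (ArrY j)"
      using Ydiv_left[OF adm r1] ArrY by (intro dist) (simp add: rp_def s_def)
    then have "joined r a ?\<sigma> j (j + a)"
      using joined_arrow[of r "ArrY j" a] \<open>j < rp\<close> unfolding rp_def by (simp add: quiver_arrow_def)
    moreover have "(j + a) mod rp = y"
      using \<alpha>(5) ArrY a(3) mod_add_right_eq[of j a rp] by simp
    ultimately show ?thesis
      using retract[of "j + a"] \<alpha>(4) ArrY \<open>j < rp\<close> rtranclp_trans unfolding rp_def by fastforce
  next
    case (ArrZ j)
    then have "j < rp"
      using \<alpha>(1) by (simp add: quiver_arrow_def)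
    obtain i where i: "a \<le> i" "i < r" "i mod rp = j" "(i + r - a) mod r = y"
      using z_lift_index_left[OF a(2), of j] \<open>j < rp\<close> \<alpha>(5) ArrZ unfolding rp_def s_def by auto
    have "distinguished r a ?\<sigma> (ArrZ i)"
      using Zdiv_left[OF adm r1 \<open>i < r\<close>] i ArrZ by (intro dist) (simp add: rp_def s_def)
    then have "joined r a ?\<sigma> i y"
      using joined_arrow[of r "ArrZ i" a] i by (simp add: quiver_arrow_def)
    then show ?thesis
      using rtranclp_trans[OF rtranclp_symclp_sym[OF retract[OF \<open>i < r\<close>]]] i \<alpha>(4) ArrZ by simp
  qed
qed

text \<open>On a cone of the right subfan, \<open>y_i\<close> with \<open>i + a < r\<close> joins \<open>i\<close> to \<open>i + a\<close>: its divisor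
  only involves rays \<open>p_k\<close> with \<open>k < r - a\<close>.\<close>

lemma joined_mod_right:
  assumes adm: "admissible r a" and r1: "1 < r" and \<sigma>': "\<sigma>' \<in> danilov_cones a (aR r a)"
    and "w < r"
  shows "joined r a (right_map r a ` \<sigma>') w (w mod a)"
  using \<open>w < r\<close>
proof (induction w rule: less_induct)
  case (less w)
  have a: "0 < a" "a < r"
    using admissible_pos[OF adm r1] by simp_all
  show ?case
  proof (cases "w < a")
    case False
    define i where "i = w - a"
    have i: "i < w" "i < r" "(i + a) mod r = w" "i mod a = w mod a"
      using False less.prems a unfolding i_def by (auto simp: le_mod_geq)
    have "tau r a w < r - a"
      using tau_left_less[OF adm r1 less.prems] False by simp
    then have "distinguished r a (right_map r a ` \<sigma>') (ArrY i)"
      using i(3) by (intro distinguished_right_cone[OF adm r1 \<sigma>']) (auto simp: rays_iff)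
    then have "joined r a (right_map r a ` \<sigma>') i w"
      using joined_arrow[of r "ArrY i" a] i by (simp add: quiver_arrow_def)
    moreover have "joined r a (right_map r a ` \<sigma>') i (w mod a)"
      using less.IH[OF i(1)] i less.prems by simp
    ultimately show ?thesis
      using rtranclp_trans[OF rtranclp_symclp_sym] by metis
  qed simp
qed

lemma joined_right_lift:
  assumes adm: "admissible r a" and r1: "1 < r" and \<sigma>': "\<sigma>' \<in> danilov_cones a (aR r a)"
    and step: "distinguished_step a (aR r a) \<sigma>' x y"
  shows "joined r a (right_map r a ` \<sigma>') x y"
proof -
  define rp where "rp = r - a"
  define s where "s = aR r a"
  let ?\<sigma> = "right_map r a ` \<sigma>'"
  obtain \<alpha> where \<alpha>: "quiver_arrow a \<alpha>" "\<alpha> \<noteq> ArrX (a - 1)" "distinguished a s \<sigma>' \<alpha>"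
    "arrow_tail \<alpha> = x" "arrow_head a s \<alpha> = y"
    using step unfolding distinguished_step_def s_def by blast
  have a: "0 < a" "a < r" "s < a" "a + rp = r"
    using admissible_pos[OF adm r1] aR_less[OF adm r1] unfolding rp_def s_def by simp_all
  have dist: "distinguished r a ?\<sigma> \<beta>"
    if "\<And>\<rho>. \<rho> \<in> rays a \<Longrightarrow> arrow_div r a \<beta> (ray_shift r a \<rho>) = arrow_div a s \<alpha> \<rho>" for \<beta>
  proof (rule distinguished_right_cone[OF adm r1 \<sigma>'])
    fix \<rho> assume "\<rho> \<in> rays a" "rayvec a (aR r a) \<rho> \<in> \<sigma>'"
    then show "arrow_div r a \<beta> (ray_shift r a \<rho>) = 0"
      using \<alpha>(3) that unfolding distinguished_def s_def by simp
  qed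
  have retract: "joined r a ?\<sigma> w (w mod a)" if "w < r" for w
    using joined_mod_right[OF adm r1 \<sigma>' that] .
  have shift: "(w + rp) mod a = (w + a - s) mod a" for w
    unfolding rp_def s_def using add_diff_mod_aR[OF adm r1] .
  show ?thesis
  proof (cases \<alpha>)
    case (ArrX j)
    then have "j < a - 1"
      using \<alpha>(1,2) by (auto simp: quiver_arrow_def)
    then have "distinguished r a ?\<sigma> (ArrX j)"
      using Xdiv_right[OF adm r1] ArrX by (intro dist) (simp add: s_def)
    then show ?thesis
      using joined_arrow[of r "ArrX j" a] \<alpha>(4,5) ArrX \<open>j < a - 1\<close> a
      by (simp add: quiver_arrow_def)
  next
    case (ArrY j)
    then have "j < a"
      using \<alpha>(1) by (simp add: quiver_arrow_def)
    obtain i where i: "i < a" "(i + rp) mod a = j" "(i + rp + a) mod r = y"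
      using y_lift_index_right[OF adm r1 \<open>j < a\<close>] \<alpha>(5) ArrY unfolding rp_def s_def by auto
    have "distinguished r a ?\<sigma> (ArrY (i + rp))"
      using Ydiv_right[OF adm r1 \<open>i < a\<close>] i(2) ArrY by (intro dist) (simp add: rp_def s_def)
    then have "joined r a ?\<sigma> (i + rp) y"
      using joined_arrow[of r "ArrY (i + rp)" a] i a by (simp add: quiver_arrow_def)
    moreover have "joined r a ?\<sigma> (i + rp) x"
      using retract[of "i + rp"] i a \<open>(i + rp) mod a = j\<close> \<alpha>(4) ArrY by simp
    ultimately show ?thesis
      using rtranclp_trans[OF rtranclp_symclp_sym] by metis
  next
    case (ArrZ j)
    then have "j < a"
      using \<alpha>(1) by (simp add: quiver_arrow_def)
    have "distinguished r a ?\<sigma> (ArrZ j)"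
      using Zdiv_right[OF adm r1] ArrZ \<open>j < a\<close> a by (intro dist) (simp add: s_def)
    then have "joined r a ?\<sigma> j (j + rp)"
      using joined_arrow[of r "ArrZ j" a] \<open>j < a\<close> a unfolding rp_def by (simp add: quiver_arrow_def)
    moreover have "(j + rp) mod a = y"
      using shift[of j] \<alpha>(5) ArrZ by simp
    ultimately show ?thesis
      using retract[of "j + rp"] \<open>j < a\<close> a \<alpha>(4) ArrZ rtranclp_trans by fastforce
  qed
qed

lemma danilov_cone_joined:
  assumes "admissible r a" "\<sigma> \<in> danilov_cones r a" "u < r" "v < r"
  shows "joined r a \<sigma> u v"
  using assms
proof (induction r arbitrary: a \<sigma> u v rule: less_induct)
  case (less r)
  show ?case
  proof (cases "r = 1")
    case False
    then have r1: "1 < r"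
      using less.prems(1) by (simp add: admissible_def)
    have a: "0 < a" "a < r"
      using admissible_pos[OF less.prems(1) r1] by simp_all
    consider "\<sigma> = {e2, e3, pvec r a (r - a)}"
      | \<sigma>' where "\<sigma> = left_map r a ` \<sigma>'" "\<sigma>' \<in> danilov_cones (r - a) (aL r a)"
      | \<sigma>' where "\<sigma> = right_map r a ` \<sigma>'" "\<sigma>' \<in> danilov_cones a (aR r a)"
      using less.prems(2) unfolding danilov_cones_rec[OF less.prems(1) r1] by blast
    then show ?thesis
    proof cases
      case 1
      then show ?thesis
        using joined_top_cone[OF less.prems(1) r1 less.prems(3,4)] by simp
    next
      case (2 \<sigma>')
      have "(symclp (distinguished_step (r - a) (aL r a) \<sigma>'))\<^sup>*\<^sup>* x y" if "x < r - a" "y < r - a" for x y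
        using less.IH[OF _ admissible_left[OF less.prems(1) r1] 2(2) that] a by simp
      then show ?thesis
        unfolding 2(1)
        using joined_mod_left[OF less.prems(1) r1 2(2)] joined_left_lift[OF less.prems(1) r1 2(2)] a
        by (intro symclp_connected_by_retraction[OF _ _ _ _ less.prems(3,4),
              where m = "r - a" and R' = "distinguished_step (r - a) (aL r a) \<sigma>'"]) simp_all
    next
      case (3 \<sigma>')
      have "(symclp (distinguished_step a (aR r a) \<sigma>'))\<^sup>*\<^sup>* x y" if "x < a" "y < a" for x y
        using less.IH[OF _ admissible_right[OF less.prems(1) r1] 3(2) that] a by simp
      then show ?thesis
        unfolding 3(1)
        using joined_mod_right[OF less.prems(1) r1 3(2)] joined_right_lift[OF less.prems(1) r1 3(2)] a
        by (intro symclp_connected_by_retraction[OF _ _ _ _ less.prems(3,4),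
              where m = a and R' = "distinguished_step a (aR r a) \<sigma>'"]) simp_all
    qed
  qed (use less.prems in simp)
qed

theorem mainTheorem9:
  fixes r a :: nat and \<sigma> :: "vec3 set"
  assumes "1 < r" and "0 < a" and "a < r" and "coprime r a"
    and "\<sigma> \<in> danilov_cones r a"
  shows "\<forall>u<r. \<forall>v<r.
    (\<lambda>i j. \<exists>\<alpha>. quiver_arrow r \<alpha> \<and> \<alpha> \<noteq> ArrX (r - 1) \<and> distinguished r a \<sigma> \<alpha> \<and>
       ((arrow_tail \<alpha> = i \<and> arrow_head r a \<alpha> = j) \<or> (arrow_tail \<alpha> = j \<and> arrow_head r a \<alpha> = i)))\<^sup>*\<^sup>* u v"
proof -
  have "admissible r a"
    using assms(1,3,4) by (simp add: admissible_def)
  moreover have "(\<lambda>i j. \<exists>\<alpha>. quiver_arrow r \<alpha> \<and> \<alpha> \<noteq> ArrX (r - 1) \<and> distinguished r a \<sigma> \<alpha> \<and>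
       ((arrow_tail \<alpha> = i \<and> arrow_head r a \<alpha> = j) \<or> (arrow_tail \<alpha> = j \<and> arrow_head r a \<alpha> = i)))
    = symclp (distinguished_step r a \<sigma>)"
    unfolding symclp_def distinguished_step_def by (intro ext) blast
  ultimately show ?thesis
    using danilov_cone_joined assms(5) by simp
qed

end
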